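(* Let $\langle A, \leq, \otimes, \mathbf{1}\rangle$ be a finitely distributive semi-lattice monoid. Then $C'(A) = C(A)$, where $C'(A) = \{c \in A \mid \exists a,b \in A.\ a < b \wedge a \otimes c = b \otimes c\}$ and $C(A) = \{c \in A \mid \exists a,b\in A.\ a \neq b \wedge a \otimes c = b \otimes c\}$.
   Context: A semi-lattice monoid (SLM) is a structure $\langle A, \leq, \otimes, \mathbf{1}\rangle$ where $\langle A, \otimes, \mathbf{1}\rangle$ is a commutative monoid and $\langle A,\leq\rangle$ is a partial order in which every finite subset $X$ (including $\emptyset$) has a least upper bound $\bigvee X$. It is finitely distributive if $a \otimes \bigvee X = \bigvee\{a \otimes x \mid x \in X\}$ for every finite $X \subseteq A$ and every $a \in A$. $a<b$ means $a\leq b$ and $a\neq b$. *)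

theory Defs
  imports Main
begin

definition is_lub :: "('a \<Rightarrow> 'a \<Rightarrow> bool) \<Rightarrow> 'a set \<Rightarrow> 'a \<Rightarrow> bool" where
  "is_lub le X s \<longleftrightarrow> (\<forall>x\<in>X. le x s) \<and> (\<forall>u. (\<forall>x\<in>X. le x u) \<longrightarrow> le s u)"

definition lub :: "('a \<Rightarrow> 'a \<Rightarrow> bool) \<Rightarrow> 'a set \<Rightarrow> 'a" where
  "lub le X = (THE s. is_lub le X s)"

definition slm :: "('a \<Rightarrow> 'a \<Rightarrow> bool) \<Rightarrow> ('a \<Rightarrow> 'a \<Rightarrow> 'a) \<Rightarrow> 'a \<Rightarrow> bool" where
  "slm le mult one \<longleftrightarrow>
     (\<forall>a b c. mult (mult a b) c = mult a (mult b c)) \<and>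
     (\<forall>a b. mult a b = mult b a) \<and>
     (\<forall>a. mult one a = a) \<and>
     (\<forall>a. le a a) \<and>
     (\<forall>a b c. le a b \<longrightarrow> le b c \<longrightarrow> le a c) \<and>
     (\<forall>a b. le a b \<longrightarrow> le b a \<longrightarrow> a = b) \<and>
     (\<forall>X. finite X \<longrightarrow> (\<exists>s. is_lub le X s))"

definition finitely_distributive_slm :: "('a \<Rightarrow> 'a \<Rightarrow> bool) \<Rightarrow> ('a \<Rightarrow> 'a \<Rightarrow> 'a) \<Rightarrow> 'a \<Rightarrow> bool" where
  "finitely_distributive_slm le mult one \<longleftrightarrow>
     slm le mult one \<and>
     (\<forall>a X. finite X \<longrightarrow> mult a (lub le X) = lub le ((\<lambda>x. mult a x) ` X))"

definition C' :: "('a \<Rightarrow> 'a \<Rightarrow> bool) \<Rightarrow> ('a \<Rightarrow> 'a \<Rightarrow> 'a) \<Rightarrow> 'a set" where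
  "C' le mult = {c. \<exists>a b. le a b \<and> a \<noteq> b \<and> mult a c = mult b c}"

definition C :: "('a \<Rightarrow> 'a \<Rightarrow> 'a) \<Rightarrow> 'a set" where
  "C mult = {c. \<exists>a b. a \<noteq> b \<and> mult a c = mult b c}"

end

theory Submission
  imports Defs
begin

text \<open>If \<open>a \<otimes> c = b \<otimes> c\<close> with \<open>a \<noteq> b\<close>, distributivity gives
  \<open>(a \<squnion> b) \<otimes> c = a \<otimes> c\<close>; since \<open>a \<squnion> b\<close> differs from at least one of \<open>a\<close>, \<open>b\<close>,
  that one lies strictly below \<open>a \<squnion> b\<close> and witnesses \<open>c \<in> C'(A)\<close>.\<close>

lemma slm_refl: "slm le mult one \<Longrightarrow> le a a"
  unfolding slm_def by (elim conjE) simp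

lemma slm_antisym: "slm le mult one \<Longrightarrow> le a b \<Longrightarrow> le b a \<Longrightarrow> a = b"
  unfolding slm_def by (elim conjE) simp

lemma slm_mult_commute: "slm le mult one \<Longrightarrow> mult a b = mult b a"
  unfolding slm_def by (elim conjE) simp

lemma slm_finite_has_lub: "slm le mult one \<Longrightarrow> finite X \<Longrightarrow> \<exists>s. is_lub le X s"
  unfolding slm_def by (elim conjE) simp

lemma lub_eqI:
  assumes antisym: "\<And>x y. le x y \<Longrightarrow> le y x \<Longrightarrow> x = y"
    and "is_lub le X s"
  shows "lub le X = s"
  unfolding lub_def
proof (rule the_equality)
  show "is_lub le X s" by fact
  fix t assume "is_lub le X t"
  with \<open>is_lub le X s\<close> show "t = s"
    unfolding is_lub_def by (simp add: antisym)
qed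

lemma lub_singleton:
  assumes "\<And>x. le x x" and "\<And>x y. le x y \<Longrightarrow> le y x \<Longrightarrow> x = y"
  shows "lub le {x} = x"
  using assms by (intro lub_eqI) (auto simp: is_lub_def)

lemma slm_is_lub_lub:
  assumes "slm le mult one" and "finite X"
  shows "is_lub le X (lub le X)"
proof -
  from slm_finite_has_lub[OF assms] obtain s where "is_lub le X s" ..
  moreover have "lub le X = s"
    using slm_antisym[OF assms(1)] \<open>is_lub le X s\<close> by (rule lub_eqI)
  ultimately show ?thesis by simp
qed

lemma slm_le_lub_pair:
  assumes "slm le mult one"
  shows "le a (lub le {a, b})" and "le b (lub le {a, b})"
  using slm_is_lub_lub[OF assms, of "{a, b}"] by (simp_all add: is_lub_def)

lemma mult_lub_pair_eq:
  assumes "finitely_distributive_slm le mult one" and "mult a c = mult b c"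
  shows "mult (lub le {a, b}) c = mult a c"
proof -
  have slm: "slm le mult one"
    and distrib: "mult c (lub le {a, b}) = lub le ((\<lambda>x. mult c x) ` {a, b})"
    using assms(1) unfolding finitely_distributive_slm_def by simp_all
  have "mult (lub le {a, b}) c = lub le {mult a c}"
    using distrib assms(2) by (simp add: slm_mult_commute[OF slm])
  also have "\<dots> = mult a c"
    using slm_refl[OF slm] slm_antisym[OF slm] by (rule lub_singleton)
  finally show ?thesis .
qed

theorem lemma7:
  fixes le :: "'a \<Rightarrow> 'a \<Rightarrow> bool" and mult :: "'a \<Rightarrow> 'a \<Rightarrow> 'a" and one :: 'a
  assumes "finitely_distributive_slm le mult one"
  shows "C' le mult = C mult"
proof
  show "C' le mult \<subseteq> C mult" unfolding C'_def C_def by blast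
  show "C mult \<subseteq> C' le mult"
  proof
    fix c assume "c \<in> C mult"
    then obtain a b where "a \<noteq> b" and ab: "mult a c = mult b c"
      unfolding C_def by blast
    define s where "s = lub le {a, b}"
    have slm: "slm le mult one"
      using assms unfolding finitely_distributive_slm_def by simp
    have "le a s" "le b s"
      unfolding s_def by (fact slm_le_lub_pair[OF slm])+
    moreover have "mult s c = mult a c"
      unfolding s_def using assms ab by (rule mult_lub_pair_eq)
    ultimately obtain x where "le x s" "x \<noteq> s" "mult x c = mult s c"
      using \<open>a \<noteq> b\<close> ab by metis
    then show "c \<in> C' le mult"
      unfolding C'_def by blast
  qed
qed

end
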